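(* Let $n>2$, $V=\mathbb{F}_2^n$, let $g\in\mathrm{Sym}(V)$ and let $W\le V$ be such that $\sigma_W=T\cap T^g$. If $\dim(W)=n-2$, then $T^g<\mathrm{AGL}(V)$.
   Context: $T=\{\sigma_v: v\in V\}\le\mathrm{Sym}(V)$ is the group of translations $\sigma_v:x\mapsto x+v$; $\sigma_W=\{\sigma_w:w\in W\}$; $T^g=g^{-1}Tg$. $\mathrm{AGL}(V)$ is the affine group of maps $x\mapsto xL+v$, $L\in\mathrm{GL}(V)$, $v\in V$ (the normaliser of $T$ in $\mathrm{Sym}(V)$). *)

theory Defs
  imports "HOL-Analysis.Analysis" "HOL-Library.Z2"
begin

text \<open>V = F_2^n is modelled as bit ^ 'n with n = CARD('n).
Right actions as in the paper: x^(gh) = (x^g)^h, so the conjugate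
g^-1 s g (apply g^-1, then s, then g) is the function g o s o inv g.\<close>

definition transl :: "'a::plus \<Rightarrow> 'a \<Rightarrow> 'a" where
  "transl v = (\<lambda>x. x + v)"

definition Transl :: "('a::plus \<Rightarrow> 'a) set" where
  "Transl = range transl"

definition conj_perm :: "('a \<Rightarrow> 'a) \<Rightarrow> ('a \<Rightarrow> 'a) set \<Rightarrow> ('a \<Rightarrow> 'a) set" where
  "conj_perm g S = (\<lambda>s. g \<circ> s \<circ> inv g) ` S"

definition AGL :: "('a::comm_ring_1 ^ 'n \<Rightarrow> 'a ^ 'n) set" where
  "AGL = {f. \<exists>(L::'a^'n^'n) v. invertible L \<and> f = (\<lambda>x. x v* L + v)}"

end

theory Submission
  imports Defs
begin

text \<open>Let \<open>t = g \<sigma>\<^sub>v g\<inverse>\<close> be an element of \<open>T\<^sup>g\<close>. It is an involution commuting with every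
  \<open>\<sigma>\<^sub>w\<close>, \<open>w \<in> W\<close>, and if its displacement \<open>c(y) = t(y) + y\<close> lies in \<open>W\<close> for one \<open>y\<close>, then
  \<open>\<sigma>\<^sub>c(y) t\<close> is an element of \<open>T\<^sup>g\<close> with a fixed point, so \<open>t\<close> is a translation. Otherwise
  \<open>u = c(0) \<notin> W\<close>, and \<open>c\<close> turns out to be constant on the cosets of the index-two subgroup
  \<open>U = W \<union> (u + W)\<close>; any such function is additive up to the constant \<open>c(0)\<close>, hence so is
  \<open>t\<close>, and a bijection of \<open>\<bbbF>\<^sub>2\<^sup>n\<close> that is additive up to a constant is affine.
  Strictness holds because \<open>AGL(V)\<close> contains non-identity maps with a fixed point, while
  the regular group \<open>T\<^sup>g\<close> does not.\<close>

lemma bit_vec_add_self [simp]: "(x::bit^'n) + x = 0"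
proof -
  have "(a::bit) + a = 0" for a by (cases a) simp_all
  then show ?thesis by (simp add: vec_eq_iff)
qed

lemma bit_vec_add_self_left [simp]: "(x::bit^'n) + (x + y) = y"
  by (metis add.assoc add_0 bit_vec_add_self)

lemma bit_vec_diff_eq_add: "(x::bit^'n) - y = x + y"
  by (metis add_diff_cancel_left' bit_vec_add_self_left diff_add_cancel)

lemma AGL_I:
  fixes f :: "bit^'n \<Rightarrow> bit^'n"
  assumes inj: "inj f" and add: "\<And>x y. f (x + y) + f 0 = f x + f y"
  shows "f \<in> AGL"
proof -
  define h where "h x = f x + f 0" for x
  have h_add: "h (x + y) = h x + h y" for x y
    using add[of x y] unfolding h_def by (metis add.assoc bit_vec_add_self_left add.commute)
  have h_scale: "h (c *s x) = c *s h x" for c x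
    by (cases c) (simp_all add: h_def)
  have "Vector_Spaces.linear (*s) (*s) h"
    by unfold_locales (simp_all add: h_add h_scale)
  then have h_matrix: "matrix h *v x = h x" for x
    by (simp add: matrix_works)
  have "inj h"
    using inj unfolding h_def inj_def by auto
  then have "inj ((*v) (matrix h))"
    by (simp add: inj_def h_matrix)
  then have "invertible (matrix h)"
    using matrix_left_invertible_injective invertible_left_inverse by blast
  then have "invertible (transpose (matrix h))"
    by (meson invertible_def matrix_left_right_inverse right_invertible_transpose)
  moreover have "f = (\<lambda>x. x v* transpose (matrix h) + f 0)"
    by (rule ext) (simp add: h_matrix h_def add.assoc)
  ultimately show ?thesis
    unfolding AGL_def by blast
qed

lemma AGL_fixing_zero_nontrivial:
  assumes "2 \<le> CARD('n)"
  obtains f :: "bit^'n \<Rightarrow> bit^'n" where "f \<in> AGL" "f 0 = 0" "f \<noteq> id"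
proof -
  obtain i j :: 'n where "i \<noteq> j"
    using assms card_le_Suc0_iff_eq[of "UNIV :: 'n set"] by auto
  define f where "f x = x + (x $ i) *s axis j (1::bit)" for x
  have f_coord: "f x $ i = x $ i" for x
    using \<open>i \<noteq> j\<close> by (simp add: f_def axis_def)
  have "f (f x) = x" for x
  proof -
    have "f (f x) = f x + (x $ i) *s axis j 1"
      using f_def[of "f x"] f_coord[of x] by simp
    also have "\<dots> = x"
      by (simp add: f_def add.assoc)
    finally show ?thesis .
  qed
  then have "inj f"
    by (metis injI)
  moreover have "f (x + y) + f 0 = f x + f y" for x y
    unfolding f_def vector_add_component vector_sadd_rdistrib zero_index vector_smult_lzero
    by (simp only: add_0_left add_0_right add_ac)
  ultimately have "f \<in> AGL"
    by (rule AGL_I)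
  moreover have "f 0 = 0"
    by (simp add: f_def)
  moreover have "f (axis i 1) \<noteq> axis i 1"
    by (simp add: f_def)
  ultimately show thesis
    using that by (metis id_apply)
qed

lemma span_insert_subspace_bit:
  fixes W :: "(bit^'n) set"
  assumes "vec.subspace W"
  shows "z \<in> vec.span (insert u W) \<longleftrightarrow> z \<in> W \<or> z + u \<in> W"
proof -
  have "vec.span W = W"
    using assms by simp
  then have "z \<in> vec.span (insert u W) \<longleftrightarrow> (\<exists>k. z - k *s u \<in> W)"
    using vec.span_insert[of u W] by (simp del: vec.span_eq_iff)
  also have "\<dots> \<longleftrightarrow> z \<in> W \<or> z + u \<in> W"
  proof
    assume "\<exists>k. z - k *s u \<in> W"
    then obtain k where "z - k *s u \<in> W" ..
    then show "z \<in> W \<or> z + u \<in> W"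
      by (cases k) (simp_all add: bit_vec_diff_eq_add)
  next
    assume "z \<in> W \<or> z + u \<in> W"
    then show "\<exists>k. z - k *s u \<in> W"
    proof
      assume "z \<in> W"
      then show ?thesis
        by (intro exI[of _ 0]) simp
    next
      assume "z + u \<in> W"
      then show ?thesis
        by (intro exI[of _ 1]) (simp add: bit_vec_diff_eq_add)
    qed
  qed
  finally show ?thesis .
qed

lemma hyperplane_add_outside:
  fixes H :: "(bit^'n) set"
  assumes H: "vec.subspace H" "vec.dim H + 1 = CARD('n)" and "x \<notin> H" "y \<notin> H"
  shows "x + y \<in> H"
proof -
  have "vec.span H = H"
    using H(1) by simp
  then have "vec.dim (insert x H) = CARD('n)"
    using H(2) \<open>x \<notin> H\<close> vec.dim_insert[of x H] by (simp del: vec.span_eq_iff)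
  then have "vec.span (insert x H) = UNIV"
    using vec.dim_eq_full[of "insert x H"] by (simp add: card_cart_basis vec.dimension_def)
  then have "y \<in> H \<or> y + x \<in> H"
    using span_insert_subspace_bit[OF H(1)] by blast
  then show ?thesis
    using \<open>y \<notin> H\<close> by (simp add: add.commute)
qed

lemma span_insert_codim_two_index_two:
  fixes W :: "(bit^'n) set"
  assumes W: "vec.subspace W" "vec.dim W + 2 = CARD('n)" and "u \<notin> W"
    and "x \<notin> vec.span (insert u W)" "y \<notin> vec.span (insert u W)"
  shows "x + y \<in> vec.span (insert u W)"
proof -
  have "vec.span W = W"
    using W(1) by simp
  then have "vec.dim (vec.span (insert u W)) + 1 = CARD('n)"
    using W(2) \<open>u \<notin> W\<close> vec.dim_insert[of u W] by (simp del: vec.span_eq_iff)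
  then show ?thesis
    using hyperplane_add_outside[OF vec.subspace_span] assms(4,5) by blast
qed

lemma additive_if_invariant_index_two:
  fixes c :: "bit^'n \<Rightarrow> bit^'n"
  assumes "0 \<in> U" and index_two: "\<And>x y. x \<notin> U \<Longrightarrow> y \<notin> U \<Longrightarrow> x + y \<in> U"
    and invariant: "\<And>x z. z \<in> U \<Longrightarrow> c (x + z) = c x"
  shows "c (x + y) + c 0 = c x + c y"
proof -
  have c_U: "c z = c 0" if "z \<in> U" for z
    using invariant[OF that, of 0] by simp
  consider "x \<in> U" | "y \<in> U" | "x \<notin> U" "y \<notin> U"
    by blast
  then show ?thesis
  proof cases
    case 1
    then show ?thesis
      using invariant[of x y] c_U by (simp add: add.commute)
  next
    case 2
    then show ?thesis
      using invariant[of y x] c_U by simp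
  next
    case 3
    then have "x + y \<in> U"
      by (rule index_two)
    then have "c y = c x"
      using invariant[of "x + y" x] by (simp add: add.assoc)
    then show ?thesis
      using c_U[OF \<open>x + y \<in> U\<close>] by simp
  qed
qed

lemma displacement_invariant_span_insert:
  fixes t :: "bit^'n \<Rightarrow> bit^'n" and W :: "(bit^'n) set"
  assumes W: "vec.subspace W" "vec.dim W + 2 = CARD('n)"
    and involution: "\<And>x. t (t x) = x"
    and commute: "\<And>y w. w \<in> W \<Longrightarrow> t (y + w) = t y + w"
    and displacement_W: "\<And>y. t y + y \<notin> W"
    and "z \<in> vec.span (insert (t 0) W)"
  shows "t (y + z) + (y + z) = t y + y"
proof -
  define c where "c y = t y + y" for y
  define u where "u = t 0"
  let ?U = "vec.span (insert u W)"
  have U_iff: "z \<in> ?U \<longleftrightarrow> z \<in> W \<or> z + u \<in> W" for z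
    using span_insert_subspace_bit[OF W(1)] .
  have "u \<notin> W" "u \<in> ?U" "z \<in> ?U"
    using displacement_W[of 0] assms(6) by (simp_all add: u_def vec.span_base)
  have c_W: "c (y + w) = c y" if "w \<in> W" for y w
    unfolding c_def commute[OF that] by (simp add: add_ac)
  have c_t: "c (t y) = c y" for y
    by (simp add: c_def involution add.commute)
  have c_U: "c z = u" if "z \<in> ?U" for z
  proof (cases "z \<in> W")
    case True
    then show ?thesis
      using c_W[of z 0] by (simp add: u_def c_def)
  next
    case False
    then have "z + u \<in> W"
      using that U_iff by blast
    then have "c z = c u"
      using c_W[of "z + u" u] by (simp add: add_ac)
    also have "\<dots> = u"
      using c_t[of 0] by (simp add: u_def c_def)
    finally show ?thesis .
  qed
  have "c y \<in> ?U" for y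
  proof (rule ccontr)
    assume "c y \<notin> ?U"
    have "y \<notin> ?U"
    proof
      assume "y \<in> ?U"
      then show False
        using \<open>c y \<notin> ?U\<close> \<open>u \<in> ?U\<close> c_U by simp
    qed
    then have "y + c y \<in> ?U"
      using span_insert_codim_two_index_two[OF W \<open>u \<notin> W\<close>] \<open>c y \<notin> ?U\<close> by blast
    moreover have "y + c y = t y"
      by (simp add: c_def add_ac)
    ultimately have "c (t y) = u"
      using c_U by simp
    then show False
      using \<open>c y \<notin> ?U\<close> \<open>u \<in> ?U\<close> c_t by simp
  qed
  then have c_add_u: "c (y + u) = c y" for y
  proof -
    have "c y \<notin> W"
      using displacement_W by (simp add: c_def)
    then have "c y + u \<in> W"
      using \<open>c y \<in> ?U\<close> U_iff by blast
    have "y + u = t y + (c y + u)"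
      by (simp add: c_def add_ac)
    then have "c (y + u) = c (t y + (c y + u))"
      by (rule arg_cong)
    also have "\<dots> = c (t y)"
      using \<open>c y + u \<in> W\<close> by (rule c_W)
    finally show ?thesis
      by (simp add: c_t)
  qed
  show ?thesis
  proof (cases "z \<in> W")
    case True
    then show ?thesis
      using c_W[OF True, of y] by (simp add: c_def)
  next
    case False
    then have "z + u \<in> W"
      using \<open>z \<in> ?U\<close> U_iff by blast
    have "c (y + z) = c ((y + u) + (z + u))"
      by (simp add: add_ac)
    also have "\<dots> = c (y + u)"
      using \<open>z + u \<in> W\<close> by (rule c_W)
    also have "\<dots> = c y"
      by (rule c_add_u)
    finally show ?thesis
      by (simp add: c_def)
  qed
qed

lemma involution_commuting_codim_two_additive:
  fixes t :: "bit^'n \<Rightarrow> bit^'n" and W :: "(bit^'n) set"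
  assumes W: "vec.subspace W" "vec.dim W + 2 = CARD('n)"
    and involution: "\<And>x. t (t x) = x"
    and commute: "\<And>y w. w \<in> W \<Longrightarrow> t (y + w) = t y + w"
    and rigid: "\<And>x y w. w \<in> W \<Longrightarrow> t y = y + w \<Longrightarrow> t x = x + w"
  shows "t (x + y) + t 0 = t x + t y"
proof (cases "\<exists>y. t y + y \<in> W")
  case True
  then obtain y w where "w \<in> W" "w = t y + y"
    by blast
  then have "t y = y + w"
    by (simp add: add_ac)
  then have "t x = x + w" for x
    using \<open>w \<in> W\<close> rigid by blast
  then show ?thesis
    by (simp only: add_ac add_0_left)
next
  case False
  let ?U = "vec.span (insert (t 0) W)"
  have no_displacement: "t y + y \<notin> W" for y
    using False by blast
  then have "t 0 \<notin> W"
    by (metis add_0_right)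
  have "(t (x + y) + (x + y)) + (t 0 + 0) = (t x + x) + (t y + y)"
  proof (rule additive_if_invariant_index_two)
    show "0 \<in> ?U"
      by (rule vec.span_zero)
    show "x + y \<in> ?U" if "x \<notin> ?U" "y \<notin> ?U" for x y
      using span_insert_codim_two_index_two[OF W \<open>t 0 \<notin> W\<close> that] .
    show "t (x + z) + (x + z) = t x + x" if "z \<in> ?U" for x z
      using displacement_invariant_span_insert[OF W involution commute no_displacement that] .
  qed
  then have "(t (x + y) + t 0) + (x + y) = (t x + t y) + (x + y)"
    by (simp only: add_ac add_0_left add_0_right)
  then show ?thesis
    by (rule add_right_imp_eq)
qed

definition conj_transl :: "('a \<Rightarrow> 'a) \<Rightarrow> 'a::plus \<Rightarrow> 'a \<Rightarrow> 'a" where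
  "conj_transl g v = g \<circ> transl v \<circ> inv g"

lemma conj_perm_Transl: "conj_perm g Transl = range (conj_transl g)"
  unfolding conj_perm_def Transl_def conj_transl_def by auto

context
  fixes g :: "'a::ab_group_add \<Rightarrow> 'a"
  assumes "bij g"
begin

lemma conj_transl_conj_transl: "conj_transl g v (conj_transl g v' x) = conj_transl g (v + v') x"
  using \<open>bij g\<close> by (simp add: conj_transl_def transl_def bij_is_inj add_ac)

lemma conj_transl_zero: "conj_transl g 0 x = x"
  using \<open>bij g\<close> by (simp add: conj_transl_def transl_def bij_is_surj surj_f_inv_f)

lemma conj_transl_fixpoint: "conj_transl g v y = y \<Longrightarrow> v = 0"
  using \<open>bij g\<close> unfolding conj_transl_def transl_def
  by (metis add_cancel_left_right bij_inv_eq_iff comp_apply)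

lemma conj_transl_eq_id_if_fixpoint: "conj_transl g v y = y \<Longrightarrow> conj_transl g v = id"
  using conj_transl_fixpoint conj_transl_zero by (auto simp: fun_eq_iff)

end

lemma conj_transl_AGL:
  fixes g :: "bit^'n \<Rightarrow> bit^'n" and W :: "(bit^'n) set"
  assumes "bij g" and W: "vec.subspace W" "vec.dim W + 2 = CARD('n)"
    and W_conj: "\<And>w. w \<in> W \<Longrightarrow> transl w \<in> range (conj_transl g)"
  shows "conj_transl g v \<in> AGL"
proof -
  let ?t = "conj_transl g v"
  have transl_W: "\<exists>v'. \<forall>x. x + w = conj_transl g v' x" if "w \<in> W" for w
  proof -
    obtain v' where "transl w = conj_transl g v'"
      using W_conj \<open>w \<in> W\<close> by blast
    then show ?thesis
      unfolding transl_def fun_eq_iff by blast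
  qed
  have involution: "?t (?t x) = x" for x
    using \<open>bij g\<close> by (simp add: conj_transl_conj_transl conj_transl_zero)
  have commute: "?t (y + w) = ?t y + w" if "w \<in> W" for y w
  proof -
    obtain v' where v': "\<And>x. x + w = conj_transl g v' x"
      using transl_W \<open>w \<in> W\<close> by blast
    have "?t (y + w) = conj_transl g (v + v') y"
      using \<open>bij g\<close> by (simp only: v' conj_transl_conj_transl)
    also have "\<dots> = conj_transl g v' (?t y)"
      using \<open>bij g\<close> by (simp only: conj_transl_conj_transl add.commute)
    finally show ?thesis
      by (simp only: v')
  qed
  \<comment> \<open>\<open>\<sigma>\<^sub>w t\<close> lies in the regular group \<open>T\<^sup>g\<close> and fixes \<open>y\<close>, so it is the identity.\<close>
  have rigid: "?t x = x + w" if "w \<in> W" "?t y = y + w" for x y w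
  proof -
    obtain v' where v': "\<And>x. x + w = conj_transl g v' x"
      using transl_W \<open>w \<in> W\<close> by blast
    have "conj_transl g (v' + v) y = ?t y + w"
      using v'[of "?t y"] \<open>bij g\<close> by (simp add: conj_transl_conj_transl)
    also have "\<dots> = y"
      using that(2) by (simp add: add.assoc)
    finally have "conj_transl g (v' + v) y = y" .
    then have "v' + v = 0"
      by (rule conj_transl_fixpoint[OF \<open>bij g\<close>])
    then have "?t x + w = x"
      using v'[of "?t x"] \<open>bij g\<close> by (simp add: conj_transl_conj_transl conj_transl_zero)
    then show ?thesis
      by (metis bit_vec_add_self_left add.commute)
  qed
  show ?thesis
  proof (rule AGL_I)
    show "inj ?t"
      by (metis injI involution)
    show "?t (x + y) + ?t 0 = ?t x + ?t y" for x y
      using involution_commuting_codim_two_additive[OF W involution commute rigid] .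
  qed
qed

theorem mainTheorem7:
  fixes g :: "bit ^ 'n \<Rightarrow> bit ^ 'n" and W :: "(bit ^ 'n) set"
  assumes "CARD('n) > 2"
    and "bij g"
    and "vec.subspace W"
    and "transl ` W = Transl \<inter> conj_perm g Transl"
    and "vec.dim W = CARD('n) - 2"
  shows "conj_perm g Transl \<subset> AGL"
proof -
  have dim_W: "vec.dim W + 2 = CARD('n)" and "2 \<le> CARD('n)"
    using assms(1,5) by simp_all
  have "transl w \<in> range (conj_transl g)" if "w \<in> W" for w
    using assms(4) that conj_perm_Transl by blast
  then have "range (conj_transl g) \<subseteq> AGL"
    using conj_transl_AGL[OF assms(2,3) dim_W] by blast
  moreover obtain f :: "bit^'n \<Rightarrow> bit^'n" where "f \<in> AGL" "f 0 = 0" "f \<noteq> id"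
    using AGL_fixing_zero_nontrivial[OF \<open>2 \<le> CARD('n)\<close>] by blast
  moreover have "f \<notin> range (conj_transl g)"
    using \<open>f 0 = 0\<close> \<open>f \<noteq> id\<close> conj_transl_eq_id_if_fixpoint[OF assms(2)] by blast
  ultimately show ?thesis
    unfolding conj_perm_Transl by blast
qed

end
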